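(* Let $\alpha>-1$, $M\ge0$, $N\ge0$, and for $n\ge1$ let $$y(x)=L_n^{\alpha,M,N}(x)=A_0L_n^{(\alpha)}(x)+A_1\frac{d}{dx}L_n^{(\alpha)}(x)+A_2\frac{d^2}{dx^2}L_n^{(\alpha)}(x),$$ where $$A_0=1+M\binom{n+\alpha}{n-1}+\frac{n(\alpha+2)-(\alpha+1)}{(\alpha+1)(\alpha+3)}N\binom{n+\alpha}{n-2}+\frac{MN}{(\alpha+1)(\alpha+2)}\binom{n+\alpha}{n-1}\binom{n+\alpha+1}{n-2},$$ $$A_1=M\binom{n+\alpha}{n}+\frac{n-1}{\alpha+1}N\binom{n+\alpha}{n-1}+\frac{2MN}{(\alpha+1)^2}\binom{n+\alpha}{n}\binom{n+\alpha+1}{n-2},$$ $$A_2=\frac{N}{\alpha+1}\binom{n+\alpha}{n-1}+\frac{MN}{(\alpha+1)^2}\binom{n+\alpha}{n}\binom{n+\alpha+1}{n-1}.$$ Define for $i=0,1,2,\ldots$ $$b_i^*(\alpha,x)=\frac{1}{i!}\sum_{j=0}^{i}(-1)^j\binom{i}{j}(\alpha+1)_{i-j}x^j,\qquad c_i^*(\alpha,x)=\frac{(-1)^i}{i!}x^i.$$ Then for every $n=1,2,3,\ldots$ the polynomial $y=L_n^{\alpha,M,N}$ satisfies $$\sum_{i=0}^{\infty}b_i^*(\alpha,x)y^{(i)}(x)+M\sum_{i=0}^{\infty}c_i^*(\alpha,x)y^{(i)}(x)=0 .$$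
   Context: $L_n^{(\alpha)}(x)=\sum_{k=0}^n\frac{(-1)^k}{k!}\binom{n+\alpha}{n-k}x^k$ denotes the classical Laguerre polynomial. $(c)_m$ is the Pochhammer symbol, $\binom{a}{m}$ the generalized binomial coefficient for real $a$, with $\binom{a}{m}=0$ when $m$ is a negative integer. The polynomials $L_n^{\alpha,M,N}$ so defined are orthogonal with respect to the Sobolev inner product $\langle f,g\rangle=\frac{1}{\Gamma(\alpha+1)}\int_0^\infty x^\alpha e^{-x}f(x)g(x)\,dx+Mf(0)g(0)+Nf'(0)g'(0)$. Since $y$ is a polynomial, the sums are finite. *)

theory Defs
  imports Complex_Main "HOL-Computational_Algebra.Polynomial"
begin

definition gbinom :: "real \<Rightarrow> int \<Rightarrow> real" where
  "gbinom a m = (if m < 0 then 0 else a gchoose (nat m))"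

definition laguerre :: "nat \<Rightarrow> real \<Rightarrow> real poly" where
  "laguerre n \<alpha> = (\<Sum>k\<le>n. monom ((-1)^k / fact k * gbinom (real n + \<alpha>) (int n - int k)) k)"

definition A0 :: "real \<Rightarrow> real \<Rightarrow> real \<Rightarrow> nat \<Rightarrow> real" where
  "A0 \<alpha> M N n = 1 + M * gbinom (n + \<alpha>) (int n - 1)
     + (real n * (\<alpha> + 2) - (\<alpha> + 1)) / ((\<alpha> + 1) * (\<alpha> + 3)) * N * gbinom (n + \<alpha>) (int n - 2)
     + M * N / ((\<alpha> + 1) * (\<alpha> + 2)) * gbinom (n + \<alpha>) (int n - 1) * gbinom (n + \<alpha> + 1) (int n - 2)"

definition A1 :: "real \<Rightarrow> real \<Rightarrow> real \<Rightarrow> nat \<Rightarrow> real" where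
  "A1 \<alpha> M N n = M * gbinom (n + \<alpha>) (int n)
     + (real n - 1) / (\<alpha> + 1) * N * gbinom (n + \<alpha>) (int n - 1)
     + 2 * M * N / (\<alpha> + 1)^2 * gbinom (n + \<alpha>) (int n) * gbinom (n + \<alpha> + 1) (int n - 2)"

definition A2 :: "real \<Rightarrow> real \<Rightarrow> real \<Rightarrow> nat \<Rightarrow> real" where
  "A2 \<alpha> M N n = N / (\<alpha> + 1) * gbinom (n + \<alpha>) (int n - 1)
     + M * N / (\<alpha> + 1)^2 * gbinom (n + \<alpha>) (int n) * gbinom (n + \<alpha> + 1) (int n - 1)"

definition sobolev_laguerre :: "nat \<Rightarrow> real \<Rightarrow> real \<Rightarrow> real \<Rightarrow> real poly" where
  "sobolev_laguerre n \<alpha> M N =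
     smult (A0 \<alpha> M N n) (laguerre n \<alpha>)
   + smult (A1 \<alpha> M N n) (pderiv (laguerre n \<alpha>))
   + smult (A2 \<alpha> M N n) (pderiv (pderiv (laguerre n \<alpha>)))"

definition bstar :: "nat \<Rightarrow> real \<Rightarrow> real \<Rightarrow> real" where
  "bstar i \<alpha> x = 1 / fact i * (\<Sum>j\<le>i. (-1)^j * real (i choose j) * pochhammer (\<alpha> + 1) (i - j) * x^j)"

definition cstar :: "nat \<Rightarrow> real \<Rightarrow> real \<Rightarrow> real" where
  "cstar i \<alpha> x = (-1)^i / fact i * x^i"

end

theory Submission
  imports Defs "HOL-Computational_Algebra.Formal_Power_Series"
begin

text \<open>
  Since y is a polynomial, both series are finite. Taylor's formula at x, evaluated at 0, shows
  that the c*-series is y(0). The coefficient b*_i is the Cauchy product of (-x)^j/j! and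
  (\<alpha>+1)_k/k!, so the same argument turns the b*-series into the sum of (\<alpha>+1)_k y_k, the integral
  of y against the Laguerre weight: the claim says that y is Sobolev-orthogonal to 1.
  From (L_n^\<alpha>)' = -L_(n-1)^(\<alpha>+1) and Chu-Vandermonde, the integrals of L, L', L'' are 0, -1, n-1,
  and their values at 0 are binomial coefficients; what remains is a rational identity among
  A0, A1, A2.
\<close>

lemma higher_pderiv_eq_0:
  fixes p :: "'a::{comm_semiring_1,semiring_no_zero_divisors,semiring_char_0} poly"
  assumes "degree p < i"
  shows "(pderiv ^^ i) p = 0"
  using assms by (intro poly_eqI) (simp add: coeff_higher_pderiv coeff_eq_0)

lemma higher_pderiv_higher_pderiv: "(pderiv ^^ j) ((pderiv ^^ k) p) = (pderiv ^^ (j + k)) p"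
  by (simp add: funpow_add)

lemma suminf_higher_pderiv_eq_sum:
  fixes p :: "real poly"
  shows "(\<Sum>i. f i * poly ((pderiv ^^ i) p) x) = (\<Sum>i\<le>degree p. f i * poly ((pderiv ^^ i) p) x)"
  by (rule suminf_finite) (auto simp: higher_pderiv_eq_0)

lemma poly_taylor_expansion:
  fixes p :: "real poly"
  assumes "degree p \<le> d"
  shows "poly p (x + h) = (\<Sum>i\<le>d. poly ((pderiv ^^ i) p) x / fact i * h ^ i)"
proof -
  define D where "D i t = poly ((pderiv ^^ i) p) (x + t)" for i t
  have "\<forall>i t. DERIV (D i) t :> D (Suc i) t"
    unfolding D_def by (auto intro!: derivative_eq_intros DERIV_chain2[OF poly_DERIV])
  then obtain t where "D 0 h = (\<Sum>i<Suc d. D i 0 / fact i * h ^ i) + D (Suc d) t / fact (Suc d) * h ^ Suc d"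
    using Maclaurin_all_le[of D "D 0"] by blast
  moreover have "D (Suc d) t = 0"
    using assms unfolding D_def by (simp add: higher_pderiv_eq_0 del: funpow.simps)
  ultimately show ?thesis
    unfolding D_def lessThan_Suc_atMost by simp
qed

lemma poly_0_eq_taylor_sum:
  fixes p :: "real poly"
  assumes "degree p \<le> d"
  shows "(\<Sum>i\<le>d. (-x) ^ i / fact i * poly ((pderiv ^^ i) p) x) = poly p 0"
  using poly_taylor_expansion[OF assms, of x "-x"] by (simp add: ac_simps)

lemma sum_triangle_eq_sum_square:
  fixes g :: "nat \<Rightarrow> nat \<Rightarrow> 'a::comm_monoid_add"
  assumes "\<And>j k. d < j + k \<Longrightarrow> g j k = 0"
  shows "(\<Sum>i\<le>d. \<Sum>j\<le>i. g j (i - j)) = (\<Sum>j\<le>d. \<Sum>k\<le>d. g j k)"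
proof -
  have "(\<Sum>i\<le>d. \<Sum>j\<le>i. g j (i - j)) = (\<Sum>(j, k)\<in>{(j, k). j + k \<le> d}. g j k)"
    by (rule sum.triangle_reindex_eq[symmetric])
  also have "\<dots> = (\<Sum>(j, k)\<in>{..d} \<times> {..d}. g j k)"
    using assms by (intro sum.mono_neutral_left) (auto simp flip: not_less)
  also have "\<dots> = (\<Sum>j\<le>d. \<Sum>k\<le>d. g j k)"
    by (rule sum.cartesian_product[symmetric])
  finally show ?thesis .
qed

lemma cstar_altdef: "cstar i \<alpha> x = (-x) ^ i / fact i"
  unfolding cstar_def power_minus[of x] by simp

lemma cstar_series_eq_poly_0:
  "(\<Sum>i. cstar i \<alpha> x * poly ((pderiv ^^ i) y) x) = poly y 0"
  unfolding suminf_higher_pderiv_eq_sum cstar_altdef by (rule poly_0_eq_taylor_sum[OF order_refl])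

lemma bstar_eq_convolution:
  "bstar i \<alpha> x = (\<Sum>j\<le>i. (-x) ^ j / fact j * (pochhammer (\<alpha> + 1) (i - j) / fact (i - j)))"
  unfolding bstar_def sum_distrib_left
proof (rule sum.cong[OF refl])
  fix j assume "j \<in> {..i}"
  then have "real (i choose j) = fact i / (fact j * fact (i - j))"
    by (simp add: binomial_fact)
  then show "1 / fact i * ((-1) ^ j * real (i choose j) * pochhammer (\<alpha> + 1) (i - j) * x ^ j)
      = (-x) ^ j / fact j * (pochhammer (\<alpha> + 1) (i - j) / fact (i - j))"
    unfolding power_minus[of x j] by (simp add: field_simps)
qed

text \<open>Integration against x^\<alpha> e^(-x) / Gamma(\<alpha>+1) over (0, \<infinity>), which sends x^k to (\<alpha>+1)_k.\<close>

definition laguerre_moment :: "real \<Rightarrow> real poly \<Rightarrow> real" where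
  "laguerre_moment \<alpha> p = (\<Sum>k\<le>degree p. pochhammer (\<alpha> + 1) k * coeff p k)"

lemma laguerre_moment_eq_sum_atMost:
  assumes "degree p \<le> d"
  shows "laguerre_moment \<alpha> p = (\<Sum>k\<le>d. pochhammer (\<alpha> + 1) k * coeff p k)"
  unfolding laguerre_moment_def
  using assms by (intro sum.mono_neutral_left) (auto simp: coeff_eq_0)

lemma laguerre_moment_add:
  "laguerre_moment \<alpha> (p + q) = laguerre_moment \<alpha> p + laguerre_moment \<alpha> q"
proof -
  define d where "d = max (degree p) (degree q)"
  have "degree p \<le> d" "degree q \<le> d" "degree (p + q) \<le> d"
    unfolding d_def by (auto intro: degree_add_le)
  then show ?thesis
    by (simp add: laguerre_moment_eq_sum_atMost[of _ d] algebra_simps sum.distrib)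
qed

lemma laguerre_moment_smult:
  "laguerre_moment \<alpha> (smult c p) = c * laguerre_moment \<alpha> p"
  using degree_smult_le[of c p]
  by (simp add: laguerre_moment_eq_sum_atMost[of _ "degree p"] sum_distrib_left ac_simps)

lemma bstar_series_eq_laguerre_moment:
  "(\<Sum>i. bstar i \<alpha> x * poly ((pderiv ^^ i) y) x) = laguerre_moment \<alpha> y"
proof -
  define d where "d = degree y"
  define g where "g j k = pochhammer (\<alpha> + 1) k / fact k
      * ((-x) ^ j / fact j * poly ((pderiv ^^ j) ((pderiv ^^ k) y)) x)" for j k
  have "(\<Sum>i. bstar i \<alpha> x * poly ((pderiv ^^ i) y) x) = (\<Sum>i\<le>d. bstar i \<alpha> x * poly ((pderiv ^^ i) y) x)"
    unfolding d_def by (rule suminf_higher_pderiv_eq_sum)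
  also have "\<dots> = (\<Sum>i\<le>d. \<Sum>j\<le>i. g j (i - j))"
    unfolding g_def bstar_eq_convolution sum_distrib_right
    by (intro sum.cong refl) (simp add: higher_pderiv_higher_pderiv ac_simps)
  also have "\<dots> = (\<Sum>j\<le>d. \<Sum>k\<le>d. g j k)"
    by (rule sum_triangle_eq_sum_square)
      (simp add: g_def d_def higher_pderiv_eq_0 higher_pderiv_higher_pderiv)
  also have "\<dots> = (\<Sum>k\<le>d. pochhammer (\<alpha> + 1) k / fact k * poly ((pderiv ^^ k) y) 0)"
    unfolding sum.swap[of g]
  proof (intro sum.cong refl)
    fix k
    have "degree ((pderiv ^^ k) y) \<le> d"
      by (simp add: d_def degree_higher_pderiv)
    then have "(\<Sum>j\<le>d. (-x) ^ j / fact j * poly ((pderiv ^^ j) ((pderiv ^^ k) y)) x)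
        = poly ((pderiv ^^ k) y) 0"
      by (rule poly_0_eq_taylor_sum)
    then show "(\<Sum>j\<le>d. g j k) = pochhammer (\<alpha> + 1) k / fact k * poly ((pderiv ^^ k) y) 0"
      unfolding g_def by (simp only: sum_distrib_left[symmetric])
  qed
  also have "\<dots> = laguerre_moment \<alpha> y"
    by (simp add: laguerre_moment_def d_def poly_0_coeff_0 coeff_higher_pderiv flip: pochhammer_fact)
  finally show ?thesis .
qed

lemma gbinom_of_nat_diff: "k \<le> n \<Longrightarrow> gbinom a (int n - int k) = a gchoose (n - k)"
  unfolding gbinom_def by (simp add: nat_diff_distrib)

lemma coeff_laguerre:
  "coeff (laguerre n \<alpha>) k = (-1) ^ k / fact k * gbinom (real n + \<alpha>) (int n - int k)"
  unfolding laguerre_def coeff_sum coeff_monom by (simp add: gbinom_def)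

lemma degree_laguerre_le: "degree (laguerre n \<alpha>) \<le> n"
  unfolding laguerre_def by (intro degree_sum_le) (auto intro: order_trans[OF degree_monom_le])

lemma pderiv_laguerre_Suc: "pderiv (laguerre (Suc n) \<alpha>) = - laguerre n (\<alpha> + 1)"
proof (rule poly_eqI)
  fix k
  have "real (Suc k) * ((-1) ^ Suc k / fact (Suc k)) = - ((-1) ^ k / fact k :: real)"
    by simp
  then show "coeff (pderiv (laguerre (Suc n) \<alpha>)) k = coeff (- laguerre n (\<alpha> + 1)) k"
    unfolding coeff_pderiv coeff_minus coeff_laguerre by (simp add: ac_simps flip: mult.assoc)
qed

lemma higher_pderiv_laguerre:
  "j \<le> n \<Longrightarrow> (pderiv ^^ j) (laguerre n \<alpha>) = smult ((-1) ^ j) (laguerre (n - j) (\<alpha> + j))"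
proof (induction j arbitrary: n \<alpha>)
  case (Suc j)
  then obtain m where n: "n = Suc m" by (cases n) auto
  have "(pderiv ^^ Suc j) (laguerre n \<alpha>) = (pderiv ^^ j) (- laguerre m (\<alpha> + 1))"
    by (simp add: n pderiv_laguerre_Suc funpow_Suc_right del: funpow.simps)
  also have "\<dots> = - (pderiv ^^ j) (laguerre m (\<alpha> + 1))"
    using higher_pderiv_smult[of j "-1" "laguerre m (\<alpha> + 1)"] by simp
  also have "\<dots> = smult ((-1) ^ Suc j) (laguerre (n - Suc j) (\<alpha> + Suc j))"
    using Suc by (simp add: n add.assoc)
  finally show ?case .
qed simp

lemma laguerre_moment_laguerre:
  "laguerre_moment \<alpha> (laguerre m \<beta>) = (real m + \<beta> - \<alpha> - 1) gchoose m"
proof -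
  have "laguerre_moment \<alpha> (laguerre m \<beta>)
      = (\<Sum>k=0..m. ((-\<alpha> - 1) gchoose k) * ((real m + \<beta>) gchoose (m - k)))"
    unfolding laguerre_moment_eq_sum_atMost[OF degree_laguerre_le] atLeast0AtMost
  proof (intro sum.cong refl)
    fix k assume "k \<in> {..m}"
    moreover have "(-\<alpha> - 1) gchoose k = (-1) ^ k * pochhammer (\<alpha> + 1) k / fact k"
      by (simp add: gbinomial_pochhammer add.commute)
    ultimately show "pochhammer (\<alpha> + 1) k * coeff (laguerre m \<beta>) k
        = ((-\<alpha> - 1) gchoose k) * ((real m + \<beta>) gchoose (m - k))"
      by (simp add: coeff_laguerre gbinom_of_nat_diff)
  qed
  also have "\<dots> = (real m + \<beta> - \<alpha> - 1) gchoose m"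
    by (simp add: gbinomial_Vandermonde algebra_simps)
  finally show ?thesis .
qed

lemma laguerre_moment_higher_pderiv_laguerre:
  assumes "j \<le> Suc m"
  shows "laguerre_moment \<alpha> ((pderiv ^^ j) (laguerre (Suc m) \<alpha>)) = (-1) ^ j * real (m choose (Suc m - j))"
  using assms
  by (simp add: higher_pderiv_laguerre laguerre_moment_smult laguerre_moment_laguerre
      of_nat_diff binomial_gbinomial)

lemma laguerre_moment_sobolev_laguerre:
  assumes "n \<ge> 1"
  shows "laguerre_moment \<alpha> (sobolev_laguerre n \<alpha> M N) = (real n - 1) * A2 \<alpha> M N n - A1 \<alpha> M N n"
proof -
  obtain m where n: "n = Suc m"
    using assms by (cases n) auto
  have L0: "laguerre_moment \<alpha> (laguerre n \<alpha>) = 0"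
    using laguerre_moment_higher_pderiv_laguerre[of 0 m \<alpha>] by (simp add: n)
  have L1: "laguerre_moment \<alpha> (pderiv (laguerre n \<alpha>)) = -1"
    using laguerre_moment_higher_pderiv_laguerre[of 1 m \<alpha>] by (simp add: n)
  have L2: "laguerre_moment \<alpha> (pderiv (pderiv (laguerre n \<alpha>))) = real m"
  proof (cases m)
    case 0
    have "degree (laguerre n \<alpha>) < 2"
      using degree_laguerre_le[of n \<alpha>] by (simp add: n 0)
    then have "pderiv (pderiv (laguerre n \<alpha>)) = 0"
      using higher_pderiv_eq_0[of "laguerre n \<alpha>" 2] by (simp add: numeral_2_eq_2)
    then show ?thesis
      by (simp add: 0 laguerre_moment_def)
  next
    case (Suc k)
    then show ?thesis
      using laguerre_moment_higher_pderiv_laguerre[of 2 m \<alpha>] by (simp add: n numeral_2_eq_2)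
  qed
  show ?thesis
    unfolding sobolev_laguerre_def laguerre_moment_add laguerre_moment_smult L0 L1 L2
    by (simp add: n)
qed

lemma coeff_0_sobolev_laguerre:
  "coeff (sobolev_laguerre n \<alpha> M N) 0
    = A0 \<alpha> M N n * gbinom (real n + \<alpha>) (int n)
    - A1 \<alpha> M N n * gbinom (real n + \<alpha>) (int n - 1)
    + A2 \<alpha> M N n * gbinom (real n + \<alpha>) (int n - 2)"
  by (simp add: sobolev_laguerre_def coeff_pderiv coeff_laguerre numeral_2_eq_2)

lemma gbinom_lower_step: "(a - of_int k + 1) * gbinom a (k - 1) = of_int k * gbinom a k"
proof (cases "k > 0")
  case True
  define j where "j = nat (k - 1)"
  have "nat k = Suc j" "of_int k = real (Suc j)"
    using True by (simp_all add: j_def)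
  with True show ?thesis
    using gbinomial_mult_1[of a j] by (simp add: gbinom_def algebra_simps flip: j_def)
qed (auto simp: gbinom_def)

lemma gbinom_Pascal: "gbinom (a + 1) k = gbinom a k + gbinom a (k - 1)"
proof (cases "k > 0")
  case True
  define j where "j = nat (k - 1)"
  have "nat k = Suc j"
    using True by (simp add: j_def)
  with True show ?thesis
    using gbinomial_Suc_Suc[of a j] by (simp add: gbinom_def flip: j_def)
qed (auto simp: gbinom_def)

lemma sobolev_laguerre_constants_relation:
  fixes \<alpha> M N :: real
  assumes "\<alpha> > -1"
  shows "(real n - 1) * A2 \<alpha> M N n - A1 \<alpha> M N n
    + M * (A0 \<alpha> M N n * gbinom (real n + \<alpha>) (int n)
      - A1 \<alpha> M N n * gbinom (real n + \<alpha>) (int n - 1)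
      + A2 \<alpha> M N n * gbinom (real n + \<alpha>) (int n - 2)) = 0"
proof -
  define g where "g = gbinom (real n + \<alpha>) (int n)"
  define G1 where "G1 = gbinom (real n + \<alpha>) (int n - 1)"
  define G2 where "G2 = gbinom (real n + \<alpha>) (int n - 2)"
  define H1 where "H1 = gbinom (real n + \<alpha> + 1) (int n - 1)"
  define H2 where "H2 = gbinom (real n + \<alpha> + 1) (int n - 2)"
  \<comment> \<open>With the inverses named, the rational identity becomes a polynomial one modulo \<open>uvw\<close>.\<close>
  define u v w where "u = inverse (\<alpha> + 1)" and "v = inverse (\<alpha> + 2)" and "w = inverse (\<alpha> + 3)"
  have uvw: "u * (\<alpha> + 1) = 1" "v * (\<alpha> + 2) = 1" "w * (\<alpha> + 3) = 1"
    unfolding u_def v_def w_def using assms by simp_all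
  have "(\<alpha> + 1) * G1 = n * g"
    using gbinom_lower_step[of "real n + \<alpha>" "int n"] by (simp add: G1_def g_def)
  then have G1_eq: "G1 = n * g * u"
    using uvw by algebra
  have "(\<alpha> + 2) * G2 = (real n - 1) * G1"
    using gbinom_lower_step[of "real n + \<alpha>" "int n - 1"] by (simp add: G1_def G2_def algebra_simps)
  then have G2_eq: "G2 = (real n - 1) * n * g * u * v"
    using uvw unfolding G1_eq by algebra
  have "H1 = G1 + G2"
    using gbinom_Pascal[of "real n + \<alpha>" "int n - 1"] by (simp add: G1_def G2_def H1_def)
  then have H1_eq: "H1 = (\<alpha> + 1 + n) * n * g * u * v"
    using uvw unfolding G1_eq G2_eq by algebra
  have "(\<alpha> + 3) * H2 = (real n - 1) * H1"
    using gbinom_lower_step[of "real n + \<alpha> + 1" "int n - 1"] by (simp add: H1_def H2_def algebra_simps)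
  then have H2_eq: "H2 = (real n - 1) * (\<alpha> + 1 + n) * n * g * u * v * w"
    using uvw unfolding H1_eq by algebra
  show ?thesis
    using uvw
    unfolding A0_def A1_def A2_def g_def[symmetric] G1_def[symmetric] G2_def[symmetric]
      H1_def[symmetric] H2_def[symmetric] G1_eq G2_eq H1_eq H2_eq
      divide_inverse inverse_mult_distrib power2_eq_square u_def[symmetric] v_def[symmetric] w_def[symmetric]
    by algebra
qed

theorem theorem3:
  fixes \<alpha> M N x :: real and n :: nat
  assumes "\<alpha> > -1" and "M \<ge> 0" and "N \<ge> 0" and "n \<ge> 1"
  defines "y \<equiv> sobolev_laguerre n \<alpha> M N"
  shows "(\<Sum>i. bstar i \<alpha> x * poly ((pderiv ^^ i) y) x)
         + M * (\<Sum>i. cstar i \<alpha> x * poly ((pderiv ^^ i) y) x) = 0"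
proof -
  have "(\<Sum>i. bstar i \<alpha> x * poly ((pderiv ^^ i) y) x) = (real n - 1) * A2 \<alpha> M N n - A1 \<alpha> M N n"
    unfolding bstar_series_eq_laguerre_moment y_def using \<open>n \<ge> 1\<close>
    by (rule laguerre_moment_sobolev_laguerre)
  moreover have "(\<Sum>i. cstar i \<alpha> x * poly ((pderiv ^^ i) y) x)
      = A0 \<alpha> M N n * gbinom (real n + \<alpha>) (int n)
      - A1 \<alpha> M N n * gbinom (real n + \<alpha>) (int n - 1)
      + A2 \<alpha> M N n * gbinom (real n + \<alpha>) (int n - 2)"
    unfolding cstar_series_eq_poly_0 poly_0_coeff_0 y_def by (rule coeff_0_sobolev_laguerre)
  ultimately show ?thesis
    using sobolev_laguerre_constants_relation[OF \<open>\<alpha> > -1\<close>] by simp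
qed

end
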